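(* Let $R$ be a quotient root system with base $S$, let $\Phi \subseteq R^+$, and let $I, J \in \mathrm{Gen}(\Phi)$. Then $I \cup J \in \mathrm{Gen}(\Phi)$ and $I \cap J \in \mathrm{Gen}(\Phi)$.
   Context: A quotient root system (QRS) $R$ is the set of non-zero images of a root system $\Delta$ (with base $\Sigma$) under the orthogonal projection of its ambient Euclidean space onto $(\mathrm{span}\,J_0)^\perp$ for some $J_0\subsetneq\Sigma$; its base $S$ consists of the images of $\Sigma\setminus J_0$, and every root is an integer combination of $S$ with all coefficients $\ge0$ (positive roots, $R^+$) or all $\le0$. For $K \subseteq S$: $R_K = R\cap\mathrm{span}\,K$, $R_K^+=R_K\cap R^+$; $\pi_K$ is orthogonal projection onto $(\mathrm{span}\,K)^\perp$, $R/K$ is the set of non-zero elements of $\pi_K(R)$ and $(R/K)^+=\pi_K(R^+)\setminus\{0\}$. Inflation: for $\Psi\subseteq(R/K)^+$, $X\subseteq R_K^+$, $\inf_K^S(\Psi,X):=\{\alpha\in R^+:\pi_K(\alpha)\in\Psi\}\cup X$. $\mathrm{Gen}(\Phi) := \{K\subseteq S : \Phi=\inf_K^S(\Theta,Y)\text{ for some }\Theta\subseteq (R/K)^+,\ Y\subseteq R_K^+\}$. *)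

theory Defs
  imports "HOL-Analysis.Analysis"
begin

definition refl_vec :: "'a::euclidean_space \<Rightarrow> 'a \<Rightarrow> 'a" where
  "refl_vec \<beta> \<alpha> = \<alpha> - ((2 * (\<alpha> \<bullet> \<beta>)) / (\<beta> \<bullet> \<beta>)) *\<^sub>R \<beta>"

definition root_system :: "'a::euclidean_space set \<Rightarrow> bool" where
  "root_system \<Delta> \<longleftrightarrow> finite \<Delta> \<and> 0 \<notin> \<Delta> \<and>
     (\<forall>\<alpha>\<in>\<Delta>. \<forall>c::real. c *\<^sub>R \<alpha> \<in> \<Delta> \<longleftrightarrow> c = 1 \<or> c = -1) \<and>
     (\<forall>\<alpha>\<in>\<Delta>. \<forall>\<beta>\<in>\<Delta>. refl_vec \<beta> \<alpha> \<in> \<Delta>) \<and>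
     (\<forall>\<alpha>\<in>\<Delta>. \<forall>\<beta>\<in>\<Delta>. (2 * (\<alpha> \<bullet> \<beta>)) / (\<beta> \<bullet> \<beta>) \<in> \<int>)"

definition is_base :: "'a::euclidean_space set \<Rightarrow> 'a set \<Rightarrow> bool" where
  "is_base \<Delta> \<Sigma> \<longleftrightarrow> \<Sigma> \<subseteq> \<Delta> \<and> independent \<Sigma> \<and>
     (\<forall>\<alpha>\<in>\<Delta>. \<exists>c::'a \<Rightarrow> int. \<alpha> = (\<Sum>s\<in>\<Sigma>. of_int (c s) *\<^sub>R s) \<and>
        ((\<forall>s\<in>\<Sigma>. c s \<ge> 0) \<or> (\<forall>s\<in>\<Sigma>. c s \<le> 0)))"

definition perp_proj :: "'a::euclidean_space set \<Rightarrow> 'a \<Rightarrow> 'a" where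
  "perp_proj K x = (THE z. (\<forall>k\<in>span K. orthogonal z k) \<and> x - z \<in> span K)"

definition quotient_root_system :: "'a::euclidean_space set \<Rightarrow> 'a set \<Rightarrow> bool" where
  "quotient_root_system R S \<longleftrightarrow>
     (\<exists>\<Delta> \<Sigma> J0. root_system \<Delta> \<and> is_base \<Delta> \<Sigma> \<and> J0 \<subset> \<Sigma> \<and>
        R = perp_proj J0 ` \<Delta> - {0} \<and> S = perp_proj J0 ` (\<Sigma> - J0))"

definition pos_roots :: "'a::euclidean_space set \<Rightarrow> 'a set \<Rightarrow> 'a set" where
  "pos_roots R S = {r\<in>R. \<exists>c::'a \<Rightarrow> int. r = (\<Sum>s\<in>S. of_int (c s) *\<^sub>R s) \<and> (\<forall>s\<in>S. c s \<ge> 0)}"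

definition sub_pos_roots :: "'a::euclidean_space set \<Rightarrow> 'a set \<Rightarrow> 'a set \<Rightarrow> 'a set" where
  "sub_pos_roots R S K = R \<inter> span K \<inter> pos_roots R S"

definition quot_pos_roots :: "'a::euclidean_space set \<Rightarrow> 'a set \<Rightarrow> 'a set \<Rightarrow> 'a set" where
  "quot_pos_roots R S K = perp_proj K ` pos_roots R S - {0}"

definition inflation :: "'a::euclidean_space set \<Rightarrow> 'a set \<Rightarrow> 'a set \<Rightarrow> 'a set \<Rightarrow> 'a set \<Rightarrow> 'a set" where
  "inflation R S K \<Psi> X = {\<alpha>\<in>pos_roots R S. perp_proj K \<alpha> \<in> \<Psi>} \<union> X"

definition Gen :: "'a::euclidean_space set \<Rightarrow> 'a set \<Rightarrow> 'a set \<Rightarrow> 'a set set" where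
  "Gen R S \<Phi> = {K. K \<subseteq> S \<and> (\<exists>\<Theta> Y. \<Theta> \<subseteq> quot_pos_roots R S K \<and> Y \<subseteq> sub_pos_roots R S K
       \<and> \<Phi> = inflation R S K \<Theta> Y)}"

end

theory Submission
  imports Defs
begin

(* Write P for the positive roots of R and pi for the projection killing span J0. A set K lies
   in Gen(Phi) iff Phi is saturated for K: for alpha, beta in P with alpha outside span K and
   alpha - beta in span K, alpha is in Phi iff beta is (the inflation data are then
   Theta = pi_K(Phi) - {0} and Y = Phi /\ span K).

   Since the base S is linearly independent, span I /\ span J = span (I /\ J), and saturation
   for I /\ J follows from saturation for I and for J.

   For I \/ J, lift alpha and beta to roots a, b of Delta with a positive, and let L consist of
   J0 and the simple roots that pi maps into I \/ J; then b - a lies in span L and a does not.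
   Because x - y is a root whenever x, y are distinct roots with <x, y> > 0, an induction on
   the coefficients of b - a joins a to b by a string of roots in a + span L, consecutive ones
   differing by an element of L up to sign. All roots of the string are positive and project
   outside span (I \/ J), and each step moves the projection by an element of span I or of
   span J, so saturation for I or for J carries membership in Phi along the string. *)

subsection \<open>Orthogonal projection onto the complement of a span\<close>

lemma orthogonal_decomp_unique:
  fixes K :: "'a::euclidean_space set"
  assumes "\<forall>k\<in>span K. orthogonal z k" "x - z \<in> span K"
    and "\<forall>k\<in>span K. orthogonal z' k" "x - z' \<in> span K"
  shows "z = z'"
proof -
  have "z' - z \<in> span K"
    using span_diff[OF assms(2,4)] by simp
  then have "orthogonal (z' - z) (z' - z)"
    using assms(1,3) by (simp add: orthogonal_def inner_diff_left)
  then show ?thesis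
    by (simp add: orthogonal_def)
qed

lemma perp_proj_decomp:
  fixes K :: "'a::euclidean_space set"
  shows "\<forall>k\<in>span K. orthogonal (perp_proj K x) k" and "x - perp_proj K x \<in> span K"
proof -
  obtain y z where "y \<in> span K" "\<And>w. w \<in> span K \<Longrightarrow> orthogonal z w" "x = y + z"
    using orthogonal_subspace_decomp_exists by metis
  then have "(\<forall>k\<in>span K. orthogonal z k) \<and> x - z \<in> span K"
    by auto
  then have "\<exists>!z. (\<forall>k\<in>span K. orthogonal z k) \<and> x - z \<in> span K"
    using orthogonal_decomp_unique[of K _ x] by blast
  then have "(\<forall>k\<in>span K. orthogonal (perp_proj K x) k) \<and> x - perp_proj K x \<in> span K"
    unfolding perp_proj_def by (rule theI')
  then show "\<forall>k\<in>span K. orthogonal (perp_proj K x) k" and "x - perp_proj K x \<in> span K"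
    by auto
qed

lemma perp_proj_unique:
  fixes K :: "'a::euclidean_space set"
  assumes "\<forall>k\<in>span K. orthogonal z k" "x - z \<in> span K"
  shows "perp_proj K x = z"
  using orthogonal_decomp_unique[OF perp_proj_decomp assms] .

lemma linear_perp_proj: "linear (perp_proj (K :: 'a::euclidean_space set))"
proof
  fix x y
  show "perp_proj K (x + y) = perp_proj K x + perp_proj K y"
  proof (rule perp_proj_unique)
    show "\<forall>k\<in>span K. orthogonal (perp_proj K x + perp_proj K y) k"
      using perp_proj_decomp(1)[of K x] perp_proj_decomp(1)[of K y]
      by (simp add: orthogonal_def inner_add_left)
    show "x + y - (perp_proj K x + perp_proj K y) \<in> span K"
      using span_add[OF perp_proj_decomp(2) perp_proj_decomp(2)] by (simp add: algebra_simps)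
  qed
next
  fix c :: real and x
  show "perp_proj K (c *\<^sub>R x) = c *\<^sub>R perp_proj K x"
  proof (rule perp_proj_unique)
    show "\<forall>k\<in>span K. orthogonal (c *\<^sub>R perp_proj K x) k"
      using perp_proj_decomp(1)[of K x] by (simp add: orthogonal_def)
    show "c *\<^sub>R x - c *\<^sub>R perp_proj K x \<in> span K"
      using span_scale[OF perp_proj_decomp(2)] by (simp add: algebra_simps)
  qed
qed

lemma perp_proj_eq_0_iff:
  fixes K :: "'a::euclidean_space set"
  shows "perp_proj K x = 0 \<longleftrightarrow> x \<in> span K"
proof
  show "perp_proj K x = 0 \<Longrightarrow> x \<in> span K"
    using perp_proj_decomp(2)[of x K] by simp
  show "x \<in> span K \<Longrightarrow> perp_proj K x = 0"
    by (rule perp_proj_unique) (auto simp: orthogonal_def)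
qed

lemma perp_proj_eq_iff:
  fixes K :: "'a::euclidean_space set"
  shows "perp_proj K x = perp_proj K y \<longleftrightarrow> x - y \<in> span K"
  using perp_proj_eq_0_iff[of K "x - y"] by (simp add: linear_diff[OF linear_perp_proj])

lemma representation_sum_basis:
  fixes B :: "'a::euclidean_space set"
  assumes "independent B" "s \<in> B"
  shows "representation B (\<Sum>v\<in>B. d v *\<^sub>R v) s = d s"
  using assms finiteI_independent[OF assms(1)]
  by (simp add: representation_sum representation_scale representation_basis span_base span_scale
      if_distrib[of "(*) _"] cong: if_cong)

lemma independent_coeff_eq_0_if_sum_in_span:
  fixes B L :: "'a::euclidean_space set"
  assumes "independent B" "L \<subseteq> B" "(\<Sum>v\<in>B. d v *\<^sub>R v) \<in> span L" "s \<in> B - L"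
  shows "d s = 0"
proof -
  have "d s = representation L (\<Sum>v\<in>B. d v *\<^sub>R v) s"
    using representation_sum_basis[of B s d] representation_extend[OF assms(1,3,2)] assms(1,4)
    by simp
  also have "\<dots> = 0"
    using representation_ne_zero assms(4) by blast
  finally show ?thesis .
qed

lemma span_Int_eq_of_independent:
  fixes B A1 A2 :: "'a::euclidean_space set"
  assumes B: "independent B" and "A1 \<subseteq> B" "A2 \<subseteq> B"
  shows "span A1 \<inter> span A2 = span (A1 \<inter> A2)"
proof
  show "span (A1 \<inter> A2) \<subseteq> span A1 \<inter> span A2"
    by (simp add: span_mono)
next
  show "span A1 \<inter> span A2 \<subseteq> span (A1 \<inter> A2)"
  proof
    fix x assume x: "x \<in> span A1 \<inter> span A2"
    have supp: "b \<in> A1 \<inter> A2" if "representation B x b \<noteq> 0" for b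
      using that x representation_extend[OF B _ assms(2)] representation_extend[OF B _ assms(3)]
        representation_ne_zero by fastforce
    have "x \<in> span B"
      using x assms(2) span_mono by blast
    then have "x = (\<Sum>b\<in>B. representation B x b *\<^sub>R b)"
      using sum_representation_eq[OF B _ finiteI_independent[OF B]] by simp
    also have "\<dots> \<in> span (A1 \<inter> A2)"
      using supp by (intro span_sum) (metis scale_eq_0_iff span_base span_scale span_zero)
    finally show "x \<in> span (A1 \<inter> A2)" .
  qed
qed

lemma perp_proj_sum_base:
  fixes B J0 :: "'a::euclidean_space set"
  assumes "finite B" "J0 \<subseteq> B"
  shows "perp_proj J0 (\<Sum>s\<in>B. u s *\<^sub>R s) = (\<Sum>s\<in>B - J0. u s *\<^sub>R perp_proj J0 s)"
proof -
  have "perp_proj J0 (\<Sum>s\<in>B. u s *\<^sub>R s) = (\<Sum>s\<in>B. u s *\<^sub>R perp_proj J0 s)"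
    by (simp add: linear_sum[OF linear_perp_proj] linear_scale[OF linear_perp_proj])
  also have "\<dots> = (\<Sum>s\<in>B - J0. u s *\<^sub>R perp_proj J0 s)"
    using assms perp_proj_eq_0_iff[of J0] span_base by (intro sum.mono_neutral_right) auto
  finally show ?thesis .
qed

lemma inj_on_perp_proj_span:
  fixes B J0 :: "'a::euclidean_space set"
  assumes "independent B" "J0 \<subseteq> B"
  shows "inj_on (perp_proj J0) (span (B - J0))"
proof -
  have "span J0 \<inter> span (B - J0) = {0}"
    using span_Int_eq_of_independent[OF assms(1), of J0 "B - J0"] assms(2) by auto
  then show ?thesis
    by (auto simp: linear_inj_on_iff_eq_0[OF linear_perp_proj subspace_span] perp_proj_eq_0_iff)
qed

lemma independent_perp_proj_image:
  fixes B J0 :: "'a::euclidean_space set"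
  assumes "independent B" "J0 \<subseteq> B"
  shows "independent (perp_proj J0 ` (B - J0))"
  using linear_independent_injective_image[OF linear_perp_proj _ inj_on_perp_proj_span[OF assms]]
    independent_mono[OF assms(1)] by blast

definition nonneg_int_comb :: "'a::real_vector set \<Rightarrow> 'a \<Rightarrow> bool" where
  "nonneg_int_comb B x \<longleftrightarrow>
     (\<exists>c::'a \<Rightarrow> int. x = (\<Sum>s\<in>B. of_int (c s) *\<^sub>R s) \<and> (\<forall>s\<in>B. 0 \<le> c s))"

lemma pos_roots_eq: "pos_roots R S = {r\<in>R. nonneg_int_comb S r}"
  by (auto simp: pos_roots_def nonneg_int_comb_def)

lemma is_base_nonneg_int_comb_cases:
  assumes "is_base D B" "x \<in> D"
  shows "nonneg_int_comb B x \<or> nonneg_int_comb B (- x)"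
proof -
  obtain c :: "'a \<Rightarrow> int" where x: "x = (\<Sum>s\<in>B. of_int (c s) *\<^sub>R s)"
    and sign: "(\<forall>s\<in>B. 0 \<le> c s) \<or> (\<forall>s\<in>B. 0 \<le> - c s)"
    using assms unfolding is_base_def by fastforce
  have "- x = (\<Sum>s\<in>B. of_int (- c s) *\<^sub>R s)"
    unfolding x by (simp add: sum_negf)
  with x sign show ?thesis
    unfolding nonneg_int_comb_def
    by (elim disjE) (blast, intro disjI2 exI[of _ "\<lambda>s. - c s"], auto)
qed

lemma nonneg_int_comb_perp_proj:
  fixes B J0 :: "'a::euclidean_space set"
  assumes B: "independent B" and J0: "J0 \<subseteq> B" and x: "nonneg_int_comb B x"
  shows "nonneg_int_comb (perp_proj J0 ` (B - J0)) (perp_proj J0 x)"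
proof -
  obtain c :: "'a \<Rightarrow> int" where c: "x = (\<Sum>s\<in>B. of_int (c s) *\<^sub>R s)" "\<forall>s\<in>B. 0 \<le> c s"
    using x unfolding nonneg_int_comb_def by blast
  have inj: "inj_on (perp_proj J0) (B - J0)"
    using inj_on_perp_proj_span[OF B J0] span_superset inj_on_subset by blast
  define c' where "c' t = c (inv_into (B - J0) (perp_proj J0) t)" for t
  have "perp_proj J0 x = (\<Sum>s\<in>B - J0. of_int (c s) *\<^sub>R perp_proj J0 s)"
    unfolding c by (rule perp_proj_sum_base[OF finiteI_independent[OF B] J0])
  also have "\<dots> = (\<Sum>t\<in>perp_proj J0 ` (B - J0). of_int (c' t) *\<^sub>R t)"
    by (simp add: sum.reindex[OF inj] c'_def inv_into_f_f[OF inj])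
  finally have "perp_proj J0 x = (\<Sum>t\<in>perp_proj J0 ` (B - J0). of_int (c' t) *\<^sub>R t)" .
  moreover have "\<forall>t\<in>perp_proj J0 ` (B - J0). 0 \<le> c' t"
    using c(2) by (auto simp: c'_def inv_into_f_f[OF inj])
  ultimately show ?thesis
    unfolding nonneg_int_comb_def by blast
qed

lemma nonneg_int_comb_summand_in_span:
  fixes B L :: "'a::euclidean_space set"
  assumes B: "independent B" and L: "L \<subseteq> B"
    and x: "nonneg_int_comb B x" and y: "nonneg_int_comb B y" and xy: "x + y \<in> span L"
  shows "x \<in> span L"
proof -
  obtain cx cy :: "'a \<Rightarrow> int"
    where cx: "x = (\<Sum>s\<in>B. of_int (cx s) *\<^sub>R s)" "\<forall>s\<in>B. 0 \<le> cx s"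
      and cy: "y = (\<Sum>s\<in>B. of_int (cy s) *\<^sub>R s)" "\<forall>s\<in>B. 0 \<le> cy s"
    using x y unfolding nonneg_int_comb_def by blast
  have "x + y = (\<Sum>s\<in>B. of_int (cx s + cy s) *\<^sub>R s)"
    unfolding cx cy by (simp add: sum.distrib scaleR_add_left)
  then have "of_int (cx s + cy s) = (0::real)" if "s \<in> B - L" for s
    using independent_coeff_eq_0_if_sum_in_span[OF B L _ that] xy by metis
  then have "cx s = 0" if "s \<in> B - L" for s
    using that cx(2) cy(2) by force
  then show ?thesis
    unfolding cx(1)
    by (intro span_sum) (metis DiffI of_int_0 scale_zero_left span_base span_scale span_zero)
qed

lemma perp_proj_in_span_iff:
  fixes B J0 K :: "'a::euclidean_space set"
  assumes K: "K \<subseteq> perp_proj J0 ` (B - J0)"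
  shows "perp_proj J0 x \<in> span K \<longleftrightarrow> x \<in> span ({s\<in>B - J0. perp_proj J0 s \<in> K} \<union> J0)"
    (is "_ \<longleftrightarrow> x \<in> span (?L \<union> J0)")
proof
  assume "perp_proj J0 x \<in> span K"
  moreover have "K = perp_proj J0 ` ?L"
    using K by auto
  ultimately have "perp_proj J0 x \<in> perp_proj J0 ` span ?L"
    by (metis span_linear_image[OF linear_perp_proj])
  then obtain y where y: "y \<in> span ?L" "perp_proj J0 x = perp_proj J0 y"
    by auto
  then have "y \<in> span (?L \<union> J0)" "x - y \<in> span (?L \<union> J0)"
    using perp_proj_eq_iff span_mono[of _ "?L \<union> J0"] by blast+
  then show "x \<in> span (?L \<union> J0)"
    using span_add by fastforce
next
  assume "x \<in> span (?L \<union> J0)"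
  then have "perp_proj J0 x \<in> span (perp_proj J0 ` (?L \<union> J0))"
    by (auto simp: span_linear_image[OF linear_perp_proj])
  moreover have "perp_proj J0 ` (?L \<union> J0) \<subseteq> insert 0 K"
    using perp_proj_eq_0_iff[of J0] span_base by fastforce
  ultimately show "perp_proj J0 x \<in> span K"
    using span_mono[of _ "insert 0 K"] by auto
qed

lemma pos_roots_quotient_lift:
  fixes D B J0 :: "'a::euclidean_space set"
  assumes base: "is_base D B" and J0: "J0 \<subseteq> B"
    and \<alpha>: "\<alpha> \<in> pos_roots (perp_proj J0 ` D - {0}) (perp_proj J0 ` (B - J0))"
  shows "\<exists>x\<in>D. perp_proj J0 x = \<alpha> \<and> nonneg_int_comb B x"
proof -
  have B: "independent B"
    using base unfolding is_base_def by blast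
  obtain x where x: "x \<in> D" "perp_proj J0 x = \<alpha>" and "\<alpha> \<noteq> 0"
    and \<alpha>_comb: "nonneg_int_comb (perp_proj J0 ` (B - J0)) \<alpha>"
    using \<alpha> by (auto simp: pos_roots_eq)
  moreover have "nonneg_int_comb B x"
  proof (rule ccontr)
    assume "\<not> nonneg_int_comb B x"
    then have "nonneg_int_comb (perp_proj J0 ` (B - J0)) (- \<alpha>)"
      using is_base_nonneg_int_comb_cases[OF base x(1)] nonneg_int_comb_perp_proj[OF B J0] x(2)
      by (metis linear_neg[OF linear_perp_proj])
    then have "\<alpha> \<in> span {}"
      using nonneg_int_comb_summand_in_span[OF independent_perp_proj_image[OF B J0] empty_subsetI
          \<alpha>_comb]
      by (simp add: span_zero)
    with \<open>\<alpha> \<noteq> 0\<close> show False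
      by (simp add: span_empty)
  qed
  ultimately show ?thesis
    by blast
qed

lemma perp_proj_in_pos_roots:
  fixes D B J0 L :: "'a::euclidean_space set"
  assumes base: "is_base D B" and J0: "J0 \<subseteq> B" and L: "L \<subseteq> B"
    and a: "nonneg_int_comb B a" "a \<notin> span L"
    and h: "h \<in> D" "h - a \<in> span L" "perp_proj J0 h \<noteq> 0"
  shows "perp_proj J0 h \<in> pos_roots (perp_proj J0 ` D - {0}) (perp_proj J0 ` (B - J0))"
proof -
  have B: "independent B"
    using base unfolding is_base_def by blast
  have "\<not> nonneg_int_comb B (- h)"
    using nonneg_int_comb_summand_in_span[OF B L a(1)] span_neg[OF h(2)] a(2) by fastforce
  then have "nonneg_int_comb B h"
    using is_base_nonneg_int_comb_cases[OF base h(1)] by blast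
  then show ?thesis
    using nonneg_int_comb_perp_proj[OF B J0] h by (auto simp: pos_roots_eq)
qed

subsection \<open>Root strings\<close>

lemma root_system_inner_sq_less:
  fixes D :: "'a::euclidean_space set"
  assumes D: "root_system D" and a: "a \<in> D" and b: "b \<in> D" and "a \<noteq> b" and pos: "0 < a \<bullet> b"
  shows "(a \<bullet> b)\<^sup>2 < (a \<bullet> a) * (b \<bullet> b)"
proof (rule ccontr)
  assume ge: "\<not> ?thesis"
  have bb: "0 < b \<bullet> b"
    using D b unfolding root_system_def by force
  define t where "t = (a \<bullet> b) / (b \<bullet> b)"
  have "(a - t *\<^sub>R b) \<bullet> (a - t *\<^sub>R b) = a \<bullet> a - (a \<bullet> b)\<^sup>2 / (b \<bullet> b)"
    using bb by (simp add: t_def inner_diff_left inner_diff_right inner_commute power2_eq_square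
        field_simps)
  also have "\<dots> \<le> 0"
    using ge bb by (simp add: field_simps)
  finally have "a - t *\<^sub>R b = 0"
    by (meson inner_ge_zero inner_eq_zero_iff order_antisym)
  then have "a = t *\<^sub>R b"
    by simp
  moreover have "t = 1 \<or> t = -1"
    using D a b \<open>a = t *\<^sub>R b\<close> unfolding root_system_def by metis
  moreover have "0 < t"
    using pos bb by (simp add: t_def)
  ultimately show False
    using \<open>a \<noteq> b\<close> by auto
qed

lemma root_system_diff_mem:
  fixes D :: "'a::euclidean_space set"
  assumes D: "root_system D" and a: "a \<in> D" and b: "b \<in> D" and "a \<noteq> b" and pos: "0 < a \<bullet> b"
  shows "a - b \<in> D"
proof -
  have aa: "0 < a \<bullet> a" and bb: "0 < b \<bullet> b"
    using D a b unfolding root_system_def by force+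
  have "2 * (a \<bullet> b) / (b \<bullet> b) \<in> \<int>" "2 * (b \<bullet> a) / (a \<bullet> a) \<in> \<int>"
    using D a b unfolding root_system_def by blast+
  then obtain m n :: int where m: "2 * (a \<bullet> b) / (b \<bullet> b) = m" and n: "2 * (a \<bullet> b) / (a \<bullet> a) = n"
    by (metis Ints_cases inner_commute)
  have "0 < real_of_int m" "0 < real_of_int n"
    unfolding m[symmetric] n[symmetric] using pos aa bb by simp_all
  then have "0 < m" "0 < n"
    by simp_all
  have "real_of_int (m * n) = 4 * (a \<bullet> b)\<^sup>2 / ((a \<bullet> a) * (b \<bullet> b))"
    by (simp flip: m n add: power2_eq_square)
  also have "\<dots> < 4"
    using root_system_inner_sq_less[OF assms] aa bb by (simp add: field_simps)
  finally have "m * n < 4"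
    by linarith
  have "m = 1 \<or> n = 1"
  proof (rule ccontr)
    assume "\<not> ?thesis"
    then have "2 * 2 \<le> m * n"
      using \<open>0 < m\<close> \<open>0 < n\<close> by (intro mult_mono) auto
    with \<open>m * n < 4\<close> show False
      by simp
  qed
  then show ?thesis
  proof
    assume "m = 1"
    then have "refl_vec b a = a - b"
      using m pos by (simp add: refl_vec_def)
    then show ?thesis
      using D a b unfolding root_system_def by metis
  next
    assume "n = 1"
    then have "refl_vec a b = b - a"
      using n pos by (simp add: refl_vec_def inner_commute)
    then have "(-1) *\<^sub>R (b - a) \<in> D"
      using D a b unfolding root_system_def by metis
    then show ?thesis
      by simp
  qed
qed

lemma sum_fun_upd:
  fixes f :: "'a \<Rightarrow> 'b \<Rightarrow> 'c::ab_group_add"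
  assumes "finite A" "s \<in> A"
  shows "(\<Sum>v\<in>A. f v ((c(s := a)) v)) = (\<Sum>v\<in>A. f v (c v)) - f s (c s) + f s a"
proof -
  have "(\<Sum>v\<in>A. f v ((c(s := a)) v)) = f s a + (\<Sum>v\<in>A - {s}. f v ((c(s := a)) v))"
    using sum.remove[OF assms, of "\<lambda>v. f v ((c(s := a)) v)"] by simp
  also have "(\<Sum>v\<in>A - {s}. f v ((c(s := a)) v)) = (\<Sum>v\<in>A - {s}. f v (c v))"
    by (rule sum.cong) auto
  also have "\<dots> = (\<Sum>v\<in>A. f v (c v)) - f s (c s)"
    using sum.remove[OF assms, of "\<lambda>v. f v (c v)"] by simp
  finally show ?thesis
    by simp
qed

definition root_steps :: "'a::real_vector set \<Rightarrow> 'a set \<Rightarrow> ('a \<times> 'a) set" where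
  "root_steps D L = {(g, h). g \<in> D \<and> h \<in> D \<and> (h - g \<in> L \<or> g - h \<in> L)}"

lemma sym_root_steps: "sym (root_steps D L)"
  by (auto simp: sym_def root_steps_def)

lemma root_steps_closer:
  fixes D B L :: "'a::euclidean_space set"
  assumes D: "root_system D" and base: "is_base D B" and L: "L \<subseteq> B"
    and y: "y \<in> D" "y \<notin> span L"
    and c: "y - x = (\<Sum>s\<in>B. of_int (c s) *\<^sub>R s)" "y - x \<in> span L"
    and pos: "0 < y \<bullet> (y - x)"
  obtains y' c' where "(y', y) \<in> root_steps D L" "y' - x = (\<Sum>s\<in>B. of_int (c' s) *\<^sub>R s)"
    "(\<Sum>s\<in>B. \<bar>c' s\<bar>) < (\<Sum>s\<in>B. \<bar>c s\<bar>)"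
proof -
  have B: "independent B" "finite B" "B \<subseteq> D"
    using base finiteI_independent unfolding is_base_def by blast+
  have "0 < (\<Sum>s\<in>B. of_int (c s) * (y \<bullet> s))"
    using pos unfolding c(1) by (simp add: inner_sum_right)
  then obtain s where s: "s \<in> B" "0 < of_int (c s) * (y \<bullet> s)"
    by (meson not_less sum_nonpos)
  have "s \<in> L"
    using independent_coeff_eq_0_if_sum_in_span[OF B(1) L, of "\<lambda>v. of_int (c v)" s] c s by fastforce
  define k where "k = sgn (c s)"
  have k: "k = 1 \<or> k = -1" "\<bar>c s - k\<bar> = \<bar>c s\<bar> - 1"
    using s(2) by (auto simp: k_def sgn_if)
  define t where "t = of_int k *\<^sub>R s"
  have t: "t = s \<or> t = - s"
    using k(1) by (auto simp: t_def)
  have "real_of_int k = 1 \<or> real_of_int k = -1"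
    using k(1) by auto
  then have "t \<in> D"
    using D B(3) s(1) unfolding root_system_def t_def by blast
  moreover have "0 < y \<bullet> t"
    using s(2) unfolding t_def k_def by (cases "0 < c s") (auto simp: zero_less_mult_iff)
  moreover have "y \<noteq> t"
    using y(2) \<open>s \<in> L\<close> t span_base span_neg by fastforce
  ultimately have "y - t \<in> D"
    using root_system_diff_mem[OF D y(1)] by blast
  then have "(y - t, y) \<in> root_steps D L"
    using y(1) \<open>s \<in> L\<close> t by (auto simp: root_steps_def)
  moreover have "y - t - x = (\<Sum>v\<in>B. of_int ((c(s := c s - k)) v) *\<^sub>R v)"
    using sum_fun_upd[OF B(2) s(1), where f="\<lambda>v n. of_int n *\<^sub>R v" and c=c and a="c s - k"] c(1)
    by (simp add: t_def algebra_simps scaleR_diff_left)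
  moreover have "(\<Sum>v\<in>B. \<bar>(c(s := c s - k)) v\<bar>) < (\<Sum>v\<in>B. \<bar>c v\<bar>)"
    using sum_fun_upd[OF B(2) s(1), where f="\<lambda>v n. \<bar>n\<bar>" and c=c and a="c s - k"] k(2) by simp
  ultimately show ?thesis
    using that by blast
qed

lemma root_steps_shorten:
  fixes D B L :: "'a::euclidean_space set"
  assumes D: "root_system D" and base: "is_base D B" and L: "L \<subseteq> B"
    and x: "x \<in> D" "x \<notin> span L" and y: "y \<in> D" "y - x \<in> span L"
    and c: "y - x = (\<Sum>s\<in>B. of_int (c s) *\<^sub>R s)" and "x \<noteq> y"
  obtains x' y' c' where "(x, x') \<in> (root_steps D L)\<^sup>=" "(y', y) \<in> (root_steps D L)\<^sup>="
    "y' - x' = (\<Sum>s\<in>B. of_int (c' s) *\<^sub>R s)" "(\<Sum>s\<in>B. \<bar>c' s\<bar>) < (\<Sum>s\<in>B. \<bar>c s\<bar>)"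
proof -
  have "(y - x) \<bullet> (y - x) = y \<bullet> (y - x) + x \<bullet> (x - y)"
    by (simp add: inner_diff_left inner_diff_right inner_commute)
  then consider "0 < y \<bullet> (y - x)" | "0 < x \<bullet> (x - y)"
    using \<open>x \<noteq> y\<close> by (metis add_nonpos_nonpos eq_iff_diff_eq_0 inner_gt_zero_iff not_less)
  then show ?thesis
  proof cases
    case 1
    have "y \<notin> span L"
      using x(2) y(2) span_diff by fastforce
    obtain y' c' where "(y', y) \<in> root_steps D L" "y' - x = (\<Sum>s\<in>B. of_int (c' s) *\<^sub>R s)"
      "(\<Sum>s\<in>B. \<bar>c' s\<bar>) < (\<Sum>s\<in>B. \<bar>c s\<bar>)"
      using root_steps_closer[OF D base L y(1) \<open>y \<notin> span L\<close> c y(2) 1] .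
    then show ?thesis
      using that[of x y' c'] by simp
  next
    case 2
    have xy: "x - y = (\<Sum>s\<in>B. of_int (- c s) *\<^sub>R s)"
      by (simp add: sum_negf flip: c)
    have "x - y \<in> span L"
      using span_neg[OF y(2)] by simp
    obtain x' c' where x': "(x', x) \<in> root_steps D L"
      "x' - y = (\<Sum>s\<in>B. of_int (c' s) *\<^sub>R s)" "(\<Sum>s\<in>B. \<bar>c' s\<bar>) < (\<Sum>s\<in>B. \<bar>- c s\<bar>)"
      using root_steps_closer[OF D base L x xy \<open>x - y \<in> span L\<close> 2] .
    show ?thesis
    proof (rule that)
      show "(x, x') \<in> (root_steps D L)\<^sup>="
        using symD[OF sym_root_steps x'(1)] by simp
      show "(y, y) \<in> (root_steps D L)\<^sup>="
        by simp
      show "y - x' = (\<Sum>s\<in>B. of_int (- c' s) *\<^sub>R s)"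
        by (simp add: sum_negf flip: x'(2))
      show "(\<Sum>s\<in>B. \<bar>- c' s\<bar>) < (\<Sum>s\<in>B. \<bar>c s\<bar>)"
        using x'(3) by simp
    qed
  qed
qed

lemma root_steps_diff_in_span:
  "(g, h) \<in> (root_steps D L)\<^sup>= \<Longrightarrow> h - g \<in> span L"
  unfolding root_steps_def
  by (auto intro: span_base span_zero) (metis minus_diff_eq span_base span_neg)

lemma root_steps_connect:
  fixes D B L :: "'a::euclidean_space set"
  assumes D: "root_system D" and base: "is_base D B" and L: "L \<subseteq> B"
    and x: "x \<in> D" "x \<notin> span L" and y: "y \<in> D" "y - x \<in> span L"
  shows "(x, y) \<in> (root_steps D L)\<^sup>*"
proof -
  have core: "(x, y) \<in> (root_steps D L)\<^sup>*"
    if "x \<in> D" "x \<notin> span L" "y \<in> D" "y - x \<in> span L"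
      "y - x = (\<Sum>s\<in>B. of_int (c s) *\<^sub>R s)" "nat (\<Sum>s\<in>B. \<bar>c s\<bar>) = n" for n x y c
    using that
  proof (induction n arbitrary: x y c rule: less_induct)
    case (less n x y c)
    show ?case
    proof (cases "x = y")
      case False
      then obtain x' y' c' where steps: "(x, x') \<in> (root_steps D L)\<^sup>=" "(y', y) \<in> (root_steps D L)\<^sup>="
        and c': "y' - x' = (\<Sum>s\<in>B. of_int (c' s) *\<^sub>R s)" "(\<Sum>s\<in>B. \<bar>c' s\<bar>) < (\<Sum>s\<in>B. \<bar>c s\<bar>)"
        using root_steps_shorten[OF D base L less.prems(1-5)] by blast
      have "x' \<in> D" "y' \<in> D"
        using steps less.prems(1,3) by (auto simp: root_steps_def)
      moreover have "x' - x \<in> span L" "y - y' \<in> span L"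
        using steps by (simp_all add: root_steps_diff_in_span)
      then have "x' \<notin> span L" "y' - x' \<in> span L"
        using less.prems(2) span_diff[OF span_diff[OF less.prems(4)]] span_diff
        by (fastforce, force simp: algebra_simps)
      moreover have "nat (\<Sum>s\<in>B. \<bar>c' s\<bar>) < n"
        using c'(2) less.prems(6) by (metis abs_ge_zero nat_less_eq_zless sum_nonneg)
      ultimately have "(x', y') \<in> (root_steps D L)\<^sup>*"
        using less.IH[OF _ _ _ _ _ c'(1) refl] by blast
      moreover have "(x, x') \<in> (root_steps D L)\<^sup>*" "(y', y) \<in> (root_steps D L)\<^sup>*"
        using steps by auto
      ultimately show ?thesis
        by (meson rtrancl_trans)
    qed simp
  qed
  obtain cx cy :: "'a \<Rightarrow> int" where "x = (\<Sum>s\<in>B. of_int (cx s) *\<^sub>R s)"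
    "y = (\<Sum>s\<in>B. of_int (cy s) *\<^sub>R s)"
    using base x(1) y(1) unfolding is_base_def by meson
  then have "y - x = (\<Sum>s\<in>B. of_int (cy s - cx s) *\<^sub>R s)"
    by (simp add: sum_subtractf scaleR_diff_left)
  then show ?thesis
    by (rule core[OF x y _ refl])
qed

subsection \<open>Saturation\<close>

definition span_saturated :: "'a::real_vector set \<Rightarrow> 'a set \<Rightarrow> 'a set \<Rightarrow> bool" where
  "span_saturated P \<Phi> K \<longleftrightarrow>
     (\<forall>\<alpha>\<in>P. \<forall>\<beta>\<in>P. \<alpha> \<notin> span K \<longrightarrow> \<alpha> - \<beta> \<in> span K \<longrightarrow> (\<alpha> \<in> \<Phi> \<longleftrightarrow> \<beta> \<in> \<Phi>))"

lemma Gen_iff_span_saturated: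
  fixes R S \<Phi> K :: "'a::euclidean_space set"
  assumes \<Phi>: "\<Phi> \<subseteq> pos_roots R S"
  shows "K \<in> Gen R S \<Phi> \<longleftrightarrow> K \<subseteq> S \<and> span_saturated (pos_roots R S) \<Phi> K"
proof
  assume "K \<in> Gen R S \<Phi>"
  then obtain \<Theta> Y where K: "K \<subseteq> S" and "Y \<subseteq> span K" and \<Phi>_eq: "\<Phi> = inflation R S K \<Theta> Y"
    unfolding Gen_def sub_pos_roots_def by blast
  then have mem: "\<alpha> \<in> \<Phi> \<longleftrightarrow> perp_proj K \<alpha> \<in> \<Theta>" if "\<alpha> \<in> pos_roots R S" "\<alpha> \<notin> span K" for \<alpha>
    using that unfolding inflation_def by auto
  show "K \<subseteq> S \<and> span_saturated (pos_roots R S) \<Phi> K"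
    unfolding span_saturated_def
  proof (intro conjI K ballI impI)
    fix \<alpha> \<beta> assume \<alpha>\<beta>: "\<alpha> \<in> pos_roots R S" "\<beta> \<in> pos_roots R S" "\<alpha> \<notin> span K" "\<alpha> - \<beta> \<in> span K"
    then have "\<beta> \<notin> span K"
      using span_add by fastforce
    with \<alpha>\<beta> show "\<alpha> \<in> \<Phi> \<longleftrightarrow> \<beta> \<in> \<Phi>"
      using mem perp_proj_eq_iff[of K \<alpha> \<beta>] by simp
  qed
next
  assume "K \<subseteq> S \<and> span_saturated (pos_roots R S) \<Phi> K"
  then have K: "K \<subseteq> S" and sat: "span_saturated (pos_roots R S) \<Phi> K"
    by auto
  define \<Theta> where "\<Theta> = perp_proj K ` \<Phi> - {0}"
  define Y where "Y = \<Phi> \<inter> span K"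
  have "\<Theta> \<subseteq> quot_pos_roots R S K" "Y \<subseteq> sub_pos_roots R S K"
    using \<Phi> unfolding \<Theta>_def Y_def quot_pos_roots_def sub_pos_roots_def pos_roots_def by blast+
  moreover have "\<Phi> \<subseteq> inflation R S K \<Theta> Y"
    using \<Phi> perp_proj_eq_0_iff[of K] unfolding inflation_def \<Theta>_def Y_def by blast
  moreover have "\<alpha> \<in> \<Phi>" if "\<alpha> \<in> pos_roots R S" "\<phi> \<in> \<Phi>" "perp_proj K \<alpha> = perp_proj K \<phi>"
    "perp_proj K \<alpha> \<noteq> 0" for \<alpha> \<phi>
  proof -
    have "\<alpha> \<notin> span K" "\<alpha> - \<phi> \<in> span K"
      using that(3,4) perp_proj_eq_0_iff perp_proj_eq_iff by metis+
    then show ?thesis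
      using that(1,2) sat \<Phi> unfolding span_saturated_def by blast
  qed
  then have "inflation R S K \<Theta> Y \<subseteq> \<Phi>"
    unfolding inflation_def \<Theta>_def Y_def by blast
  ultimately show "K \<in> Gen R S \<Phi>"
    unfolding Gen_def using K by blast
qed

lemma span_saturated_Int:
  assumes "span_saturated P \<Phi> I" "span_saturated P \<Phi> J" "span I \<inter> span J \<subseteq> span (I \<inter> J)"
  shows "span_saturated P \<Phi> (I \<inter> J)"
  using assms span_mono[of "I \<inter> J" I] span_mono[of "I \<inter> J" J]
  unfolding span_saturated_def by blast

lemma perp_proj_diff_root_steps:
  fixes B J0 I J :: "'a::euclidean_space set"
  assumes "(y, z) \<in> root_steps D ({s\<in>B - J0. perp_proj J0 s \<in> I \<union> J} \<union> J0)" (is "_ \<in> root_steps D ?L")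
  shows "perp_proj J0 y - perp_proj J0 z \<in> span I \<union> span J"
proof -
  have l: "perp_proj J0 l \<in> span I \<union> span J" if "l \<in> ?L" for l
  proof (cases "l \<in> J0")
    case True
    then have "perp_proj J0 l = 0"
      using perp_proj_eq_0_iff span_base by blast
    then show ?thesis
      using span_zero by auto
  next
    case False
    then show ?thesis
      using that span_base by auto
  qed
  have diff: "perp_proj J0 (u - v) = perp_proj J0 u - perp_proj J0 v" for u v
    by (rule linear_diff[OF linear_perp_proj])
  from assms consider "y - z \<in> ?L" | "z - y \<in> ?L"
    unfolding root_steps_def by blast
  then show ?thesis
  proof cases
    case 1
    then show ?thesis
      using l[OF 1] by (simp add: diff)
  next
    case 2
    then have "- (perp_proj J0 y - perp_proj J0 z) \<in> span I \<union> span J"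
      using l[OF 2] by (simp add: diff)
    then show ?thesis
      using span_neg by (metis UnE UnI1 UnI2 minus_minus)
  qed
qed

lemma span_saturated_Un_step:
  assumes "span_saturated P \<Phi> I" "span_saturated P \<Phi> J" "\<alpha> \<in> P" "\<beta> \<in> P"
    and "\<alpha> \<notin> span (I \<union> J)" "\<alpha> - \<beta> \<in> span I \<union> span J"
  shows "\<alpha> \<in> \<Phi> \<longleftrightarrow> \<beta> \<in> \<Phi>"
  using assms span_mono[of I "I \<union> J"] span_mono[of J "I \<union> J"]
  unfolding span_saturated_def by blast

lemma span_saturated_Un_quotient:
  fixes D B J0 R S I J :: "'a::euclidean_space set"
  assumes D: "root_system D" and base: "is_base D B" and J0: "J0 \<subseteq> B"
    and R: "R = perp_proj J0 ` D - {0}" and S: "S = perp_proj J0 ` (B - J0)"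
    and I: "I \<subseteq> S" and J: "J \<subseteq> S"
    and sat: "span_saturated (pos_roots R S) \<Phi> I" "span_saturated (pos_roots R S) \<Phi> J"
  shows "span_saturated (pos_roots R S) \<Phi> (I \<union> J)"
  unfolding span_saturated_def
proof (intro ballI impI)
  fix \<alpha> \<beta> assume \<alpha>: "\<alpha> \<in> pos_roots R S" and \<beta>: "\<beta> \<in> pos_roots R S"
    and \<alpha>_notin: "\<alpha> \<notin> span (I \<union> J)" and \<alpha>\<beta>: "\<alpha> - \<beta> \<in> span (I \<union> J)"
  define L where "L = {s\<in>B - J0. perp_proj J0 s \<in> I \<union> J} \<union> J0"
  have L: "L \<subseteq> B"
    using J0 by (auto simp: L_def)
  have in_span: "perp_proj J0 x \<in> span (I \<union> J) \<longleftrightarrow> x \<in> span L" for x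
    unfolding L_def using I J S by (intro perp_proj_in_span_iff) auto
  obtain a where a: "a \<in> D" "perp_proj J0 a = \<alpha>" "nonneg_int_comb B a"
    using pos_roots_quotient_lift[OF base J0] \<alpha> unfolding R S by blast
  obtain b where b: "b \<in> D" "perp_proj J0 b = \<beta>"
    using \<beta> unfolding R S pos_roots_def by auto
  have a_notin: "a \<notin> span L"
    using in_span \<alpha>_notin a(2) by blast
  have coset: "perp_proj J0 h \<in> pos_roots R S \<and> perp_proj J0 h \<notin> span (I \<union> J)"
    if "h \<in> D" "h - a \<in> span L" for h
  proof -
    have "h \<notin> span L"
      using that(2) a_notin span_diff by fastforce
    then have "perp_proj J0 h \<notin> span (I \<union> J)"
      using in_span by blast
    moreover from this have "perp_proj J0 h \<noteq> 0"
      using span_zero by force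
    then have "perp_proj J0 h \<in> pos_roots R S"
      unfolding R S by (rule perp_proj_in_pos_roots[OF base J0 L a(3) a_notin that])
    ultimately show ?thesis
      by blast
  qed
  have "perp_proj J0 (b - a) \<in> span (I \<union> J)"
    using span_neg[OF \<alpha>\<beta>] a(2) b(2) by (simp add: linear_diff[OF linear_perp_proj])
  then have "(a, b) \<in> (root_steps D L)\<^sup>*"
    using root_steps_connect[OF D base L a(1) a_notin b(1)] in_span by blast
  moreover have "g \<in> D \<and> g - a \<in> span L \<and> (perp_proj J0 g \<in> \<Phi> \<longleftrightarrow> \<alpha> \<in> \<Phi>)"
    if "(a, g) \<in> (root_steps D L)\<^sup>*" for g
    using that
  proof (induction rule: rtrancl_induct)
    case base
    then show ?case
      using a(1,2) by (simp add: span_zero)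
  next
    case (step g h)
    have "h - g \<in> span L"
      using root_steps_diff_in_span step.hyps(2) by blast
    then have h: "h \<in> D" "h - a \<in> span L"
      using step.hyps(2) step.IH span_add[of "h - g" L "g - a"] by (auto simp: root_steps_def)
    have "perp_proj J0 g - perp_proj J0 h \<in> span I \<union> span J"
      using perp_proj_diff_root_steps step.hyps(2) unfolding L_def by blast
    then have "perp_proj J0 g \<in> \<Phi> \<longleftrightarrow> perp_proj J0 h \<in> \<Phi>"
      using span_saturated_Un_step[OF sat] coset[OF h] coset step.IH by blast
    then show ?case
      using h step.IH by blast
  qed
  ultimately show "\<alpha> \<in> \<Phi> \<longleftrightarrow> \<beta> \<in> \<Phi>"
    using b(2) by blast
qed

theorem proposition3p11:
  fixes R S \<Phi> I J :: "'a::euclidean_space set"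
  assumes "quotient_root_system R S"
    and "\<Phi> \<subseteq> pos_roots R S"
    and "I \<in> Gen R S \<Phi>" and "J \<in> Gen R S \<Phi>"
  shows "I \<union> J \<in> Gen R S \<Phi> \<and> I \<inter> J \<in> Gen R S \<Phi>"
proof -
  obtain D B J0 where D: "root_system D" and base: "is_base D B" and "J0 \<subset> B"
    and R: "R = perp_proj J0 ` D - {0}" and S: "S = perp_proj J0 ` (B - J0)"
    using assms(1) unfolding quotient_root_system_def by blast
  then have J0: "J0 \<subseteq> B" and "independent S"
    using independent_perp_proj_image base unfolding is_base_def by blast+
  have I: "I \<subseteq> S" "span_saturated (pos_roots R S) \<Phi> I"
    and J: "J \<subseteq> S" "span_saturated (pos_roots R S) \<Phi> J"
    using assms(2-4) Gen_iff_span_saturated by blast+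
  have "span_saturated (pos_roots R S) \<Phi> (I \<union> J)"
    by (rule span_saturated_Un_quotient[OF D base J0 R S I(1) J(1) I(2) J(2)])
  moreover have "span_saturated (pos_roots R S) \<Phi> (I \<inter> J)"
    using span_saturated_Int[OF I(2) J(2)] span_Int_eq_of_independent[OF \<open>independent S\<close> I(1) J(1)]
    by blast
  ultimately show ?thesis
    using Gen_iff_span_saturated[OF assms(2)] I(1) J(1) by blast
qed

end
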